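(* Let $A\subset\mathbb R$ be an open interval of length strictly larger than $2$, let $\psi:A\to\mathbb C$ be a regular $\mathbb C$-supershift on $A$, and let $a_0\in A$. Then the function $a\in A\mapsto\int_{a_0}^a\psi(\alpha)\,d\alpha$ is a regular $\mathbb C$-supershift on $A$.
   Context: For an open interval $A\subset\mathbb R$ of length $R>2$ (possibly infinite), set $\mathbb A=\{(a,a')\in\mathbb R\times A:\ a'+[-1,1]\subset A,\ a+a'\in A\}$. For a sequence $\boldsymbol\epsilon=(\epsilon_N)_{N\ge1}$ with $\epsilon_N\in[0,1)$ and $\epsilon_N\to0$, put $h^{\boldsymbol\epsilon}_{N,\nu}=1-2\,\frac{\nu+\epsilon_N(N-\nu)}{N}$ for $0\le\nu\le N$. For a continuous $\psi:A\to\mathbb C$ and $(a,a')\in\mathbb A$ set $$S_N^{\boldsymbol\epsilon}[\psi](a,a')=\sum_{\nu=0}^N\binom N\nu\Big(\frac{1+a}2\Big)^{N-\nu}\Big(\frac{1-a}2\Big)^{\nu}\psi\big(a'+h^{\boldsymbol\epsilon}_{N,\nu}\big).$$ A continuous $\psi:A\to\mathbb C$ is called a regular $\mathbb C$-supershift on $A$ if (1) for every such sequence $\boldsymbol\epsilon$, $S_N^{\boldsymbol\epsilon}[\psi](a,a')\to\psi(a+a')$ as $N\to\infty$ uniformly on compact subsets of $\mathbb A$; and (2) for every family $\{\boldsymbol\epsilon_{\iota'}=(\epsilon_{\iota',N})_{N\ge1}:\iota'\in I'\}$ of such sequences with $\sup_{\iota'\in I'}\epsilon_{\iota',N}\to0$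 as $N\to\infty$, the convergence in (1) is uniform with respect to $\iota'\in I'$ on each compact subset of $\mathbb A$. *)

theory Defs
  imports "HOL-Analysis.Analysis" "HOL-Probability.Probability"
begin

text \<open>An open interval of \<real> of length strictly larger than 2 (possibly unbounded).
  The length sup A - inf A exceeds 2 iff A contains two points at distance > 2.\<close>
definition open_interval_gt2 :: "real set \<Rightarrow> bool" where
  "open_interval_gt2 A \<longleftrightarrow> open A \<and> is_interval A \<and> (\<exists>x\<in>A. \<exists>y\<in>A. y - x > 2)"

definition AA :: "real set \<Rightarrow> (real \<times> real) set" where
  "AA A = {(a, a'). a' \<in> A \<and> {a' - 1 .. a' + 1} \<subseteq> A \<and> a + a' \<in> A}"

definition admissible_seq :: "(nat \<Rightarrow> real) \<Rightarrow> bool" where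
  "admissible_seq eps \<longleftrightarrow> (\<forall>N\<ge>1. 0 \<le> eps N \<and> eps N < 1) \<and> eps \<longlonglongrightarrow> 0"

definition hseq :: "(nat \<Rightarrow> real) \<Rightarrow> nat \<Rightarrow> nat \<Rightarrow> real" where
  "hseq eps N \<nu> = 1 - 2 * ((real \<nu> + eps N * (real N - real \<nu>)) / real N)"

definition SN :: "(nat \<Rightarrow> real) \<Rightarrow> (real \<Rightarrow> complex) \<Rightarrow> nat \<Rightarrow> real \<times> real \<Rightarrow> complex" where
  "SN eps \<psi> N p = (\<Sum>\<nu>=0..N. of_real (real (N choose \<nu>) * ((1 + fst p) / 2) ^ (N - \<nu>)
        * ((1 - fst p) / 2) ^ \<nu>) * \<psi> (snd p + hseq eps N \<nu>))"

text \<open>Regular C-supershift. A family of sequences indexed by I' is represented by its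
  image set E (uniformity w.r.t. the index is the same as uniformity over E).\<close>
definition regular_supershift :: "real set \<Rightarrow> (real \<Rightarrow> complex) \<Rightarrow> bool" where
  "regular_supershift A \<psi> \<longleftrightarrow> continuous_on A \<psi> \<and>
     (\<forall>eps. admissible_seq eps \<longrightarrow>
        (\<forall>K. compact K \<and> K \<subseteq> AA A \<longrightarrow>
           uniform_limit K (\<lambda>N p. SN eps \<psi> N p) (\<lambda>p. \<psi> (fst p + snd p)) sequentially)) \<and>
     (\<forall>E. (\<forall>eps\<in>E. admissible_seq eps) \<and> (\<lambda>N. SUP eps\<in>E. eps N) \<longlonglongrightarrow> 0 \<longrightarrow>
        (\<forall>K. compact K \<and> K \<subseteq> AA A \<longrightarrow>
           uniform_limit (E \<times> K) (\<lambda>N q. SN (fst q) \<psi> N (snd q))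
              (\<lambda>q. \<psi> (fst (snd q) + snd (snd q))) sequentially))"

end

theory Submission
  imports Defs
begin

text \<open>Let Psi be the primitive of psi and N = M + 1. Differentiating S_N[Psi](t, a') in t gives
  N/2 times a Bernstein sum of order M of the forward differences Psi(a' + h_{N,nu}) -
  Psi(a' + h_{N,nu+1}). Consecutive nodes are L = 2 (1 - eps_N) / N apart, and the left nodes
  h_{N,nu+1} are the nodes h_{M,nu} of the shifted sequence eps_{M+1} + (1 - eps_{M+1}) / (M + 1).
  Hence the derivative is 1 - eps_N times an average over s in [0, L] of the supershift operators
  of order M for psi and the shifted sequence, evaluated at (t, a' + s); since shifted sequences
  again form an admissible family, these converge to psi(t + a') uniformly. At t = 1 only the
  node h_{N,0} = 1 - 2 eps_N carries weight, so S_N[Psi](1, a') is close to Psi(a' + 1), and the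
  mean value inequality on the segment from 1 to a gives the uniform convergence of
  S_N[Psi](a, a') to Psi(a + a').\<close>

subsection \<open>Nodes and weights\<close>

lemma hseq_bounds:
  assumes "1 \<le> N" "0 \<le> eps N" "eps N \<le> 1" "\<nu> \<le> N"
  shows "-1 \<le> hseq eps N \<nu>" "hseq eps N \<nu> \<le> 1"
proof -
  have N: "real N > 0" using assms by simp
  have "eps N * (real N - real \<nu>) \<le> 1 * (real N - real \<nu>)"
    using assms by (intro mult_right_mono) auto
  moreover have "0 \<le> real \<nu> + eps N * (real N - real \<nu>)"
    using assms by simp
  ultimately show "-1 \<le> hseq eps N \<nu>" "hseq eps N \<nu> \<le> 1"
    using N unfolding hseq_def by (auto simp: field_simps)
qed

lemma hseq_Suc:
  assumes "1 \<le> N"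
  shows "hseq eps N (Suc \<nu>) + 2 * (1 - eps N) / real N = hseq eps N \<nu>"
  using assms unfolding hseq_def by (simp add: field_simps)

lemma hseq_0: "hseq eps (Suc M) 0 = 1 - 2 * eps (Suc M)"
  by (simp add: hseq_def)

definition shifted_seq :: "(nat \<Rightarrow> real) \<Rightarrow> nat \<Rightarrow> real" where
  "shifted_seq eps M = eps (Suc M) + (1 - eps (Suc M)) / real (Suc M)"

lemma hseq_shifted_seq:
  assumes "1 \<le> M"
  shows "hseq (shifted_seq eps) M \<nu> = hseq eps (Suc M) (Suc \<nu>)"
proof -
  have key: "(n + (e + (1 - e) / (m + 1)) * (m - n)) / m = (n + 1 + e * (m - n)) / (m + 1)"
    if "m > 0" for n e m :: real
    using that by (simp add: divide_simps) (simp add: algebra_simps)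
  show ?thesis
    using key[of "real M" "real \<nu>" "eps (Suc M)"] assms
    unfolding hseq_def shifted_seq_def by (simp add: algebra_simps)
qed

definition bernstein_weight :: "nat \<Rightarrow> real \<Rightarrow> nat \<Rightarrow> real" where
  "bernstein_weight M t \<nu> = real (M choose \<nu>) * ((1 + t) / 2) ^ (M - \<nu>) * ((1 - t) / 2) ^ \<nu>"

lemma SN_eq_bernstein_sum:
  "SN eps f N p = (\<Sum>\<nu>=0..N. of_real (bernstein_weight N (fst p) \<nu>) * f (snd p + hseq eps N \<nu>))"
  by (simp add: SN_def bernstein_weight_def)

lemma bernstein_weight_Suc_self: "bernstein_weight M t (Suc M) = 0"
  by (simp add: bernstein_weight_def)

lemma bernstein_weight_at_1: "bernstein_weight M 1 \<nu> = (if \<nu> = 0 then 1 else 0)"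
  by (simp add: bernstein_weight_def)

lemma bernstein_weight_has_real_derivative:
  "((\<lambda>t. bernstein_weight (Suc M) t \<nu>) has_real_derivative
     real (Suc M) / 2 * (bernstein_weight M t \<nu>
       - (if \<nu> = 0 then 0 else bernstein_weight M t (\<nu> - 1)))) (at t)"
proof (cases \<nu>)
  case 0
  show ?thesis unfolding 0 bernstein_weight_def
    by (rule derivative_eq_intros refl | simp)+
next
  case (Suc k)
  have choose_Suc: "real (Suc M choose Suc k) * real (Suc k) = real (Suc M) * real (M choose k)"
    by (metis Suc_times_binomial_eq of_nat_mult)
  have choose_comp: "real (Suc M choose Suc k) * real (M - k) = real (Suc M) * real (M choose Suc k)"
    using binomial_absorb_comp[of "Suc M" "Suc k"]
    by (metis diff_Suc_Suc diff_Suc_1 mult.commute of_nat_mult)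
  define p where "p = (1 + t) / 2"
  define q where "q = (1 - t) / 2"
  have D: "((\<lambda>t. bernstein_weight (Suc M) t \<nu>) has_real_derivative
     real (Suc M choose Suc k) * (real (M - k) * p ^ (M - k - 1) * (1/2) * q ^ Suc k
        + p ^ (M - k) * (real (Suc k) * q ^ k * (- 1/2)))) (at t)"
    unfolding Suc bernstein_weight_def p_def q_def
    by (rule derivative_eq_intros refl | simp)+ (simp add: field_simps)
  have "real (Suc M choose Suc k) * (real (M - k) * p ^ (M - k - 1) * (1/2) * q ^ Suc k
        + p ^ (M - k) * (real (Suc k) * q ^ k * (- 1/2)))
      = (real (Suc M choose Suc k) * real (M - k)) * p ^ (M - Suc k) * q ^ Suc k / 2
        - (real (Suc M choose Suc k) * real (Suc k)) * p ^ (M - k) * q ^ k / 2"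
    by (simp add: field_simps del: binomial_Suc_Suc)
  also have "\<dots> = real (Suc M) / 2 * (bernstein_weight M t \<nu>
       - (if \<nu> = 0 then 0 else bernstein_weight M t (\<nu> - 1)))"
    unfolding choose_Suc choose_comp Suc bernstein_weight_def p_def q_def
    by (simp add: field_simps del: binomial_Suc_Suc)
  finally show ?thesis using D by (simp only:)
qed

lemma bernstein_sum_has_vector_derivative:
  fixes g :: "nat \<Rightarrow> complex"
  shows "((\<lambda>t. \<Sum>\<nu>=0..Suc M. of_real (bernstein_weight (Suc M) t \<nu>) * g \<nu>) has_vector_derivative
     of_real (real (Suc M) / 2) * (\<Sum>\<nu>=0..M. of_real (bernstein_weight M t \<nu>) * (g \<nu> - g (Suc \<nu>)))) (at t)"
proof -
  let ?w = "bernstein_weight M t"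
  have D: "((\<lambda>t. \<Sum>\<nu>=0..Suc M. of_real (bernstein_weight (Suc M) t \<nu>) * g \<nu>) has_vector_derivative
     (\<Sum>\<nu>=0..Suc M. of_real (real (Suc M) / 2 * (?w \<nu> - (if \<nu> = 0 then 0 else ?w (\<nu> - 1)))) * g \<nu>))
     (at t)"
    by (intro has_vector_derivative_sum has_vector_derivative_mult_left
        has_vector_derivative_of_real bernstein_weight_has_real_derivative)
  have "(\<Sum>\<nu>=0..Suc M. of_real (real (Suc M) / 2 * (?w \<nu> - (if \<nu> = 0 then 0 else ?w (\<nu> - 1)))) * g \<nu>)
      = of_real (real (Suc M) / 2) * ((\<Sum>\<nu>=0..Suc M. of_real (?w \<nu>) * g \<nu>)
          - (\<Sum>\<nu>=0..Suc M. of_real (if \<nu> = 0 then 0 else ?w (\<nu> - 1)) * g \<nu>))"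
    by (simp add: sum_distrib_left sum_subtractf algebra_simps)
  also have "(\<Sum>\<nu>=0..Suc M. of_real (?w \<nu>) * g \<nu>) = (\<Sum>\<nu>=0..M. of_real (?w \<nu>) * g \<nu>)"
    by (simp add: bernstein_weight_Suc_self)
  also have "(\<Sum>\<nu>=0..Suc M. of_real (if \<nu> = 0 then 0 else ?w (\<nu> - 1)) * g \<nu>)
      = (\<Sum>\<nu>=0..M. of_real (?w \<nu>) * g (Suc \<nu>))"
    by (subst sum.atLeast_Suc_atMost)
      (simp_all add: sum.shift_bounds_cl_Suc_ivl del: sum.cl_ivl_Suc)
  finally have "(\<Sum>\<nu>=0..Suc M. of_real (real (Suc M) / 2 * (?w \<nu> - (if \<nu> = 0 then 0 else ?w (\<nu> - 1))))
      * g \<nu>) = of_real (real (Suc M) / 2) * (\<Sum>\<nu>=0..M. of_real (?w \<nu>) * (g \<nu> - g (Suc \<nu>)))"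
    by (simp add: sum_subtractf algebra_simps)
  then show ?thesis using D by (simp only:)
qed

subsection \<open>Admissible sequences\<close>

lemma admissible_le_SUP:
  assumes "\<forall>e\<in>E. admissible_seq e" "eps \<in> E" "1 \<le> N"
  shows "0 \<le> eps N" "eps N < 1" "eps N \<le> (SUP e\<in>E. e N)"
proof -
  show "0 \<le> eps N" "eps N < 1" using assms unfolding admissible_seq_def by auto
  have "bdd_above ((\<lambda>e. e N) ` E)"
    using assms unfolding admissible_seq_def
    by (intro bdd_aboveI[where M=1]) (auto intro: less_imp_le)
  then show "eps N \<le> (SUP e\<in>E. e N)" by (rule cSUP_upper[OF assms(2)])
qed

lemma shifted_seq_bounds:
  assumes "0 \<le> eps (Suc M)" "eps (Suc M) < 1" "1 \<le> M"
  shows "0 \<le> shifted_seq eps M" "shifted_seq eps M < 1"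
    "shifted_seq eps M \<le> eps (Suc M) + inverse (real (Suc M))"
proof -
  have "real (Suc M) > 1" using assms by simp
  then have "(1 - eps (Suc M)) / real (Suc M) < 1 - eps (Suc M)"
    using assms by (simp add: divide_less_eq)
  then show "shifted_seq eps M < 1" by (simp add: shifted_seq_def)
  show "0 \<le> shifted_seq eps M" using assms by (simp add: shifted_seq_def)
  show "shifted_seq eps M \<le> eps (Suc M) + inverse (real (Suc M))"
    using divide_right_mono[of "1 - eps (Suc M)" 1 "real (Suc M)"] assms
    by (simp add: shifted_seq_def inverse_eq_divide)
qed

lemma shifted_seq_tendsto_0:
  assumes "eps \<longlonglongrightarrow> 0"
  shows "shifted_seq eps \<longlonglongrightarrow> 0"
proof -
  have "(\<lambda>M. eps (Suc M) + (1 - eps (Suc M)) * inverse (real (Suc M))) \<longlonglongrightarrow> 0 + (1 - 0) * 0"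
    by (intro tendsto_intros LIMSEQ_Suc[OF assms] LIMSEQ_inverse_real_of_nat)
  then show ?thesis by (simp add: shifted_seq_def[abs_def] divide_inverse)
qed

lemma admissible_shifted_seq: "admissible_seq eps \<Longrightarrow> admissible_seq (shifted_seq eps)"
  using shifted_seq_bounds[of eps] shifted_seq_tendsto_0[of eps]
  unfolding admissible_seq_def by auto

lemma SUP_shifted_seq_tendsto_0:
  assumes "E \<noteq> {}" and adm: "\<forall>e\<in>E. admissible_seq e" and lim: "(\<lambda>N. SUP e\<in>E. e N) \<longlonglongrightarrow> 0"
  shows "(\<lambda>M. SUP d\<in>shifted_seq ` E. d M) \<longlonglongrightarrow> 0"
proof -
  have "0 \<le> (SUP e\<in>E. shifted_seq e M)" if "1 \<le> M" for M
  proof -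
    obtain e0 where e0: "e0 \<in> E" using \<open>E \<noteq> {}\<close> by blast
    have "bdd_above ((\<lambda>e. shifted_seq e M) ` E)"
      using admissible_le_SUP[OF adm, of _ "Suc M"] shifted_seq_bounds[of _ M] that
      by (intro bdd_aboveI[where M=1]) (auto intro: less_imp_le)
    then have "shifted_seq e0 M \<le> (SUP e\<in>E. shifted_seq e M)" by (rule cSUP_upper[OF e0])
    moreover have "0 \<le> shifted_seq e0 M"
      using admissible_le_SUP[OF adm e0, of "Suc M"] shifted_seq_bounds[of e0 M] that by auto
    ultimately show ?thesis by linarith
  qed
  then have lower: "\<forall>\<^sub>F M in sequentially. 0 \<le> (SUP e\<in>E. shifted_seq e M)"
    unfolding eventually_sequentially by blast
  have "(SUP e\<in>E. shifted_seq e M) \<le> (SUP e\<in>E. e (Suc M)) + inverse (real (Suc M))"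
    if "1 \<le> M" for M
  proof (rule cSUP_least[OF \<open>E \<noteq> {}\<close>])
    fix e assume "e \<in> E"
    show "shifted_seq e M \<le> (SUP e\<in>E. e (Suc M)) + inverse (real (Suc M))"
      using admissible_le_SUP[OF adm \<open>e \<in> E\<close>, of "Suc M"] shifted_seq_bounds[of e M] that
      by linarith
  qed
  then have upper: "\<forall>\<^sub>F M in sequentially.
      (SUP e\<in>E. shifted_seq e M) \<le> (SUP e\<in>E. e (Suc M)) + inverse (real (Suc M))"
    unfolding eventually_sequentially by blast
  have "(\<lambda>M. (SUP e\<in>E. e (Suc M)) + inverse (real (Suc M))) \<longlonglongrightarrow> 0 + 0"
    by (intro tendsto_intros LIMSEQ_Suc[OF lim] LIMSEQ_inverse_real_of_nat)
  then have "(\<lambda>M. SUP e\<in>E. shifted_seq e M) \<longlonglongrightarrow> 0"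
    using tendsto_sandwich[OF lower upper tendsto_const] by simp
  then show ?thesis by (simp add: image_image)
qed

subsection \<open>The domain of the supershift operators\<close>

lemma mem_AA_iff:
  assumes "is_interval A"
  shows "p \<in> AA A \<longleftrightarrow> snd p - 1 \<in> A \<and> snd p + 1 \<in> A \<and> fst p + snd p \<in> A"
proof
  assume "snd p - 1 \<in> A \<and> snd p + 1 \<in> A \<and> fst p + snd p \<in> A"
  moreover from this have "{snd p - 1 .. snd p + 1} \<subseteq> A"
    using assms unfolding is_interval_1 by (meson atLeastAtMost_iff subsetI)
  ultimately show "p \<in> AA A" unfolding AA_def by (auto simp: case_prod_beta)
qed (auto simp: AA_def)

lemma open_AA:
  assumes "open A" "is_interval A"
  shows "open (AA A)"
proof -
  have "AA A = (\<lambda>p. snd p - 1) -` A \<inter> (\<lambda>p. snd p + 1) -` A \<inter> (\<lambda>p. fst p + snd p) -` A"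
    by (simp add: set_eq_iff mem_AA_iff[OF assms(2)])
  also have "open \<dots>"
    by (intro open_Int open_vimage assms(1) continuous_intros)
  finally show ?thesis .
qed

lemma segment_in_AA:
  assumes "is_interval A" "(a, a') \<in> AA A" "t \<in> {min 1 a..max 1 a}"
  shows "(t, a') \<in> AA A"
proof -
  have A: "a' - 1 \<in> A" "a' + 1 \<in> A" "a + a' \<in> A"
    using assms(2) mem_AA_iff[OF assms(1), of "(a, a')"] by auto
  have "min (1 + a') (a + a') \<le> t + a'" "t + a' \<le> max (1 + a') (a + a')"
    using assms(3) by auto
  moreover have "min (1 + a') (a + a') \<in> A" "max (1 + a') (a + a') \<in> A"
    using A by (auto simp: min_def max_def add.commute)
  ultimately have "t + a' \<in> A" using assms(1) unfolding is_interval_1 by blast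
  with A show ?thesis by (simp add: mem_AA_iff[OF assms(1)])
qed

lemma compact_AA_segment_thickening:
  assumes "open A" "is_interval A" "compact K" "K \<subseteq> AA A"
  obtains \<beta> C where "\<beta> > 0" "compact C" "C \<subseteq> AA A"
    "\<And>a a' t s. (a, a') \<in> K \<Longrightarrow> t \<in> {min 1 a..max 1 a} \<Longrightarrow> s \<in> {0..\<beta>} \<Longrightarrow> (t, a' + s) \<in> C"
proof -
  define S where "S = (\<lambda>z. ((1 - snd z) + snd z * fst (fst z), snd (fst z))) ` (K \<times> {0..(1::real)})"
  have "compact S" unfolding S_def
    by (intro compact_continuous_image compact_Times assms(3) compact_Icc continuous_intros)
  have "S \<subseteq> AA A"
  proof
    fix p assume "p \<in> S"
    then obtain a a' u where aK: "(a, a') \<in> K" and u: "u \<in> {0..1}" and p: "p = ((1 - u) + u * a, a')"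
      unfolding S_def by auto
    have A: "a' - 1 \<in> A" "a' + 1 \<in> A" "a + a' \<in> A"
      using assms(4) aK mem_AA_iff[OF assms(2), of "(a, a')"] by auto
    have "(1 - u) *\<^sub>R (1 + a') + u *\<^sub>R (a + a') \<in> A"
      using u A by (intro convexD[OF is_interval_convex[OF assms(2)]]) (auto simp: add.commute)
    then show "p \<in> AA A" unfolding p mem_AA_iff[OF assms(2)] using A by (simp add: algebra_simps)
  qed
  then obtain r where r: "r > 0" "(\<Union>x\<in>S. ball x r) \<subseteq> AA A"
    using compact_subset_open_imp_ball_epsilon_subset[OF \<open>compact S\<close> open_AA[OF assms(1,2)]] by blast
  define C where "C = (\<lambda>z. (fst (fst z), snd (fst z) + snd z)) ` (S \<times> {0..r/2})"
  show thesis
  proof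
    show "r / 2 > 0" "compact C" using r \<open>compact S\<close> unfolding C_def
      by (auto intro!: compact_continuous_image compact_Times continuous_intros)
    show "C \<subseteq> AA A"
    proof
      fix p assume "p \<in> C"
      then obtain t s \<tau> where "(t, s) \<in> S" "\<tau> \<in> {0..r/2}" and p: "p = (t, s + \<tau>)"
        unfolding C_def by auto
      moreover from this have "p \<in> ball (t, s) r"
        using r by (simp add: dist_Pair_Pair dist_real_def)
      ultimately show "p \<in> AA A" using r(2) by blast
    qed
    fix a a' t s assume aK: "(a, a') \<in> K" and t: "t \<in> {min 1 a..max 1 a}" and s: "s \<in> {0..r/2}"
    have "t \<in> closed_segment 1 a" using t by (auto simp: closed_segment_eq_real_ivl)
    then obtain u where u: "0 \<le> u" "u \<le> 1" "t = (1 - u) * 1 + u * a"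
      unfolding closed_segment_def by auto
    have "(t, a') \<in> S" unfolding S_def
      by (rule image_eqI[where x="((a, a'), u)"]) (use u aK in auto)
    then show "(t, a' + s) \<in> C" unfolding C_def
      using s by (intro image_eqI[where x="((t, a'), s)"]) auto
  qed
qed

lemma bounded_on_segments:
  assumes "open A" "is_interval A" "continuous_on A f" "compact K" "K \<subseteq> AA A"
  obtains P where "0 \<le> P" "\<And>a a' t. (a, a') \<in> K \<Longrightarrow> t \<in> {min 1 a..max 1 a} \<Longrightarrow> norm (f (t + a')) \<le> P"
proof -
  obtain \<beta> C where "\<beta> > 0" "compact C" "C \<subseteq> AA A"
    and in_C: "\<And>a a' t s. (a, a') \<in> K \<Longrightarrow> t \<in> {min 1 a..max 1 a} \<Longrightarrow> s \<in> {0..\<beta>} \<Longrightarrow> (t, a' + s) \<in> C"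
    using compact_AA_segment_thickening[OF assms(1,2,4,5)] by blast
  define S where "S = (\<lambda>z. fst z + snd z) ` C"
  have "compact S" unfolding S_def by (intro compact_continuous_image \<open>compact C\<close> continuous_intros)
  moreover have "S \<subseteq> A" using \<open>C \<subseteq> AA A\<close> mem_AA_iff[OF assms(2)] unfolding S_def by auto
  ultimately have "bounded (f ` S)"
    by (intro compact_imp_bounded compact_continuous_image continuous_on_subset[OF assms(3)])
  then obtain P where P: "\<forall>y\<in>f ` S. norm y \<le> P" unfolding bounded_iff by blast
  show thesis
  proof (rule that[of "max 0 P"])
    fix a a' t assume "(a, a') \<in> K" "t \<in> {min 1 a..max 1 a}"
    then have "t + a' \<in> S" using in_C[of a a' t 0] \<open>\<beta> > 0\<close> unfolding S_def by force
    then show "norm (f (t + a')) \<le> max 0 P" using P by fastforce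
  qed simp
qed

lemma regular_supershift_family:
  assumes "regular_supershift A f" "\<forall>eps\<in>E. admissible_seq eps" "(\<lambda>N. SUP eps\<in>E. eps N) \<longlonglongrightarrow> 0"
    "compact K" "K \<subseteq> AA A"
  shows "uniform_limit (E \<times> K) (\<lambda>N q. SN (fst q) f N (snd q)) (\<lambda>q. f (fst (snd q) + snd (snd q)))
    sequentially"
  using assms unfolding regular_supershift_def by blast

text \<open>Condition (1) of the definition is condition (2) for the one-element family {eps}.\<close>
lemma regular_supershiftI:
  assumes "continuous_on A f"
    and family: "\<And>E K. \<forall>eps\<in>E. admissible_seq eps \<Longrightarrow> (\<lambda>N. SUP eps\<in>E. eps N) \<longlonglongrightarrow> 0 \<Longrightarrow>
      compact K \<Longrightarrow> K \<subseteq> AA A \<Longrightarrow>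
      uniform_limit (E \<times> K) (\<lambda>N q. SN (fst q) f N (snd q)) (\<lambda>q. f (fst (snd q) + snd (snd q)))
        sequentially"
  shows "regular_supershift A f"
  unfolding regular_supershift_def
proof (intro conjI allI impI assms)
  fix eps :: "nat \<Rightarrow> real" and K :: "(real \<times> real) set"
  assume adm: "admissible_seq eps" and K: "compact K \<and> K \<subseteq> AA A"
  have "uniform_limit ({eps} \<times> K) (\<lambda>N q. SN (fst q) f N (snd q))
      (\<lambda>q. f (fst (snd q) + snd (snd q))) sequentially"
    using adm K by (intro family) (auto simp: admissible_seq_def)
  then show "uniform_limit K (\<lambda>N p. SN eps f N p) (\<lambda>p. f (fst p + snd p)) sequentially"
    unfolding uniform_limit_iff by (simp add: eventually_mono)
qed (auto intro!: family)

lemma SN_uniform_near_segments: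
  assumes "open A" "is_interval A" "regular_supershift A f"
    and adm: "\<forall>eps\<in>E. admissible_seq eps" and lim: "(\<lambda>N. SUP eps\<in>E. eps N) \<longlonglongrightarrow> 0"
    and "compact K" "K \<subseteq> AA A" "\<eta> > 0"
  shows "\<forall>\<^sub>F M in sequentially. \<forall>d\<in>E. \<forall>(a, a')\<in>K. \<forall>t\<in>{min 1 a..max 1 a}. \<forall>s\<in>{0..2 / real (Suc M)}.
    norm (SN d f M (t, a' + s) - f (t + a')) < \<eta>"
proof -
  obtain \<beta> C where \<beta>: "\<beta> > 0" and C: "compact C" "C \<subseteq> AA A"
    and in_C: "\<And>a a' t s. (a, a') \<in> K \<Longrightarrow> t \<in> {min 1 a..max 1 a} \<Longrightarrow> s \<in> {0..\<beta>} \<Longrightarrow> (t, a' + s) \<in> C"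
    using compact_AA_segment_thickening[OF assms(1,2,6,7)] by blast
  define P where "P = (\<lambda>z. fst z + snd z) ` C"
  have "compact P" unfolding P_def by (intro compact_continuous_image C continuous_intros)
  moreover have "P \<subseteq> A" using C mem_AA_iff[OF assms(2)] unfolding P_def by auto
  moreover have "continuous_on A f" using assms(3) by (simp add: regular_supershift_def)
  ultimately have "uniformly_continuous_on P f"
    by (meson compact_uniformly_continuous continuous_on_subset)
  then obtain \<rho> where \<rho>: "\<rho> > 0"
    "\<And>x x'. x \<in> P \<Longrightarrow> x' \<in> P \<Longrightarrow> dist x' x < \<rho> \<Longrightarrow> dist (f x') (f x) < \<eta> / 2"
    using \<open>\<eta> > 0\<close> unfolding uniformly_continuous_on_def by (metis half_gt_zero)
  have "\<forall>\<^sub>F M in sequentially. \<forall>q\<in>E \<times> C. dist (SN (fst q) f M (snd q)) (f (fst (snd q) + snd (snd q))) < \<eta> / 2"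
    using regular_supershift_family[OF assms(3) adm lim C] half_gt_zero[OF \<open>\<eta> > 0\<close>]
    by (rule uniform_limitD)
  moreover have "\<forall>\<^sub>F M in sequentially. 2 / real (Suc M) < min \<rho> \<beta>"
    using order_tendstoD(2)[OF LIMSEQ_Suc[OF lim_const_over_n[of "2::real"]], of "min \<rho> \<beta>"] \<rho> \<beta>
    by simp
  ultimately show ?thesis
  proof eventually_elim
    case (elim M)
    show ?case
    proof (intro ballI, clarify)
      fix d a a' t s assume "d \<in> E" "(a, a') \<in> K" "t \<in> {min 1 a..max 1 a}" "s \<in> {0..2 / real (Suc M)}"
      then have C: "(t, a' + s) \<in> C" "(t, a') \<in> C"
        using in_C[of a a' t s] in_C[of a a' t 0] elim(2) \<beta> by auto
      then have "t + (a' + s) \<in> P" "t + a' \<in> P"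
        unfolding P_def by (force intro: image_eqI)+
      with \<open>s \<in> _\<close> elim(2) have "dist (f (t + (a' + s))) (f (t + a')) < \<eta> / 2"
        by (intro \<rho>(2)) (auto simp: dist_real_def)
      moreover have "dist (SN d f M (t, a' + s)) (f (t + (a' + s))) < \<eta> / 2"
        using bspec[OF elim(1), of "(d, t, a' + s)"] \<open>d \<in> E\<close> C(1) by simp
      ultimately show "norm (SN d f M (t, a' + s) - f (t + a')) < \<eta>"
        using dist_triangle[of "SN d f M (t, a' + s)" "f (t + a')" "f (t + (a' + s))"]
        by (simp add: dist_norm)
    qed
  qed
qed

subsection \<open>Supershift operators applied to a primitive\<close>

lemma norm_diff_le_of_vector_derivative_bound:
  fixes W :: "real \<Rightarrow> 'b::real_normed_vector"
  assumes "convex S"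
    and "\<And>\<tau>. \<tau> \<in> S \<Longrightarrow> (W has_vector_derivative W' \<tau>) (at \<tau> within S)"
    and "\<And>\<tau>. \<tau> \<in> S \<Longrightarrow> norm (W' \<tau>) \<le> B"
    and "x \<in> S" "y \<in> S"
  shows "norm (W x - W y) \<le> B * \<bar>x - y\<bar>"
proof -
  have "norm (W x - W y) \<le> B * norm (x - y)"
  proof (rule differentiable_bound[where f' = "\<lambda>\<tau> h. h *\<^sub>R W' \<tau>"])
    show "(W has_derivative (\<lambda>h. h *\<^sub>R W' \<tau>)) (at \<tau> within S)" if "\<tau> \<in> S" for \<tau>
      using assms(2)[OF that] by (simp add: has_vector_derivative_def)
    show "onorm (\<lambda>h. h *\<^sub>R W' \<tau>) \<le> B" if "\<tau> \<in> S" for \<tau>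
      using onorm_scaleR_left[OF bounded_linear_ident, of "W' \<tau>"] assms(3)[OF that]
      by (simp add: onorm_id)
  qed (use assms in simp_all)
  then show ?thesis by simp
qed

lemma interval_integral_has_vector_derivative:
  fixes f :: "real \<Rightarrow> 'a::euclidean_space"
  assumes "open A" "is_interval A" "continuous_on A f" "a0 \<in> A" "x \<in> A"
  shows "((\<lambda>a. LBINT y=a0..a. f y) has_vector_derivative f x) (at x)"
proof -
  obtain e where e: "e > 0" "ball x e \<subseteq> A" using assms(1,5) open_contains_ball by blast
  define lo where "lo = min a0 (x - e/2)"
  define hi where "hi = max a0 (x + e/2)"
  have "x - e/2 \<in> A" "x + e/2 \<in> A" using e by (auto simp: dist_real_def subset_iff)
  then have "lo \<in> A" "hi \<in> A" unfolding lo_def hi_def min_def max_def using assms(4) by simp_all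
  then have "{lo..hi} \<subseteq> A"
    using assms(2) unfolding is_interval_1 by (meson atLeastAtMost_iff subsetI)
  moreover have o: "lo \<le> a0" "a0 \<le> hi" "lo < x" "x < hi"
    using e by (simp_all add: lo_def hi_def)
  ultimately have "((\<lambda>u. LBINT y=a0..u. f y) has_vector_derivative f x) (at x within {lo..hi})"
    by (intro interval_integral_FTC2 continuous_on_subset[OF assms(3)]) auto
  then have "((\<lambda>u. LBINT y=a0..u. f y) has_vector_derivative f x) (at x within {lo<..<hi})"
    by (rule has_vector_derivative_within_subset) auto
  then show ?thesis
    using o has_vector_derivative_within_open[of x "{lo<..<hi}"] by auto
qed

lemma norm_rescaled_increment_le:
  fixes S c :: complex and k L e B :: real
  assumes "norm (S - of_real L * c) \<le> L * B" "0 \<le> k" "k * L = 1 - e" "0 \<le> e" "0 \<le> B"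
  shows "norm (of_real k * S - c) \<le> B + e * norm c"
proof -
  have "of_real k * (S - of_real L * c) - of_real e * c = of_real k * S - of_real (k * L + e) * c"
    by (simp add: algebra_simps)
  then have "of_real k * S - c = of_real k * (S - of_real L * c) - of_real e * c"
    using assms(3) by simp
  also have "norm \<dots> \<le> k * norm (S - of_real L * c) + e * norm c"
    using norm_triangle_ineq4[of "of_real k * (S - of_real L * c)" "of_real e * c"] assms(2,4)
    by (simp add: norm_mult)
  also have "\<dots> \<le> k * (L * B) + e * norm c"
    using assms(1,2) by (simp add: mult_left_mono)
  also have "k * (L * B) = (1 - e) * B"
    by (metis assms(3) mult.assoc)
  also have "(1 - e) * B + e * norm c \<le> B + e * norm c"
    using assms(4,5) by (simp add: algebra_simps)
  finally show ?thesis .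
qed

locale primitive_on =
  fixes A :: "real set" and f F :: "real \<Rightarrow> complex"
  assumes open_domain: "open A" and interval_domain: "is_interval A"
    and has_vector_derivative_primitive: "\<And>x. x \<in> A \<Longrightarrow> (F has_vector_derivative f x) (at x)"
begin

lemma continuous_on_primitive: "continuous_on A F"
  by (meson continuous_at_imp_continuous_on has_vector_derivative_continuous
      has_vector_derivative_primitive)

lemma weighted_increment_bound:
  assumes "finite I" "0 \<le> L"
    and in_A: "\<And>\<nu> \<tau>. \<nu> \<in> I \<Longrightarrow> \<tau> \<in> {0..1} \<Longrightarrow> x \<nu> + \<tau> * L \<in> A"
    and bound: "\<And>\<tau>. \<tau> \<in> {0..1} \<Longrightarrow> norm ((\<Sum>\<nu>\<in>I. w \<nu> * f (x \<nu> + \<tau> * L)) - c) \<le> B"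
  shows "norm ((\<Sum>\<nu>\<in>I. w \<nu> * (F (x \<nu> + L) - F (x \<nu>))) - of_real L * c) \<le> L * B"
proof -
  define W where "W \<tau> = (\<Sum>\<nu>\<in>I. w \<nu> * F (x \<nu> + \<tau> * L)) - of_real (\<tau> * L) * c" for \<tau>
  have "(W has_vector_derivative of_real L * ((\<Sum>\<nu>\<in>I. w \<nu> * f (x \<nu> + \<tau> * L)) - c))
      (at \<tau> within {0..1})" if \<tau>: "\<tau> \<in> {0..1}" for \<tau>
  proof -
    have "((\<lambda>\<tau>. F (x \<nu> + \<tau> * L)) has_vector_derivative L *\<^sub>R f (x \<nu> + \<tau> * L)) (at \<tau>)"
      if "\<nu> \<in> I" for \<nu>
    proof -
      have "((\<lambda>\<tau>. x \<nu> + \<tau> * L) has_vector_derivative L) (at \<tau>)"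
        by (auto intro!: derivative_eq_intros simp flip: has_real_derivative_iff_has_vector_derivative)
      from vector_diff_chain_at[OF this has_vector_derivative_primitive[OF in_A[OF that \<tau>]]]
      show ?thesis by (simp add: o_def)
    qed
    then have "((\<lambda>\<tau>. \<Sum>\<nu>\<in>I. w \<nu> * F (x \<nu> + \<tau> * L)) has_vector_derivative
        (\<Sum>\<nu>\<in>I. w \<nu> * (L *\<^sub>R f (x \<nu> + \<tau> * L)))) (at \<tau>)"
      by (intro has_vector_derivative_sum has_vector_derivative_mult_right)
    moreover have "((\<lambda>\<tau>. of_real (\<tau> * L) * c) has_vector_derivative of_real L * c) (at \<tau>)"
      using has_vector_derivative_of_real[of "\<lambda>\<tau>. \<tau> * L" L "at \<tau>"]
      by (intro has_vector_derivative_mult_left) (auto intro!: derivative_eq_intros)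
    ultimately have "(W has_vector_derivative
        (\<Sum>\<nu>\<in>I. w \<nu> * (L *\<^sub>R f (x \<nu> + \<tau> * L))) - of_real L * c) (at \<tau>)"
      unfolding W_def by (rule has_vector_derivative_diff)
    moreover have "(\<Sum>\<nu>\<in>I. w \<nu> * (L *\<^sub>R f (x \<nu> + \<tau> * L))) - of_real L * c
        = of_real L * ((\<Sum>\<nu>\<in>I. w \<nu> * f (x \<nu> + \<tau> * L)) - c)"
      by (simp add: scaleR_conv_of_real sum_distrib_left right_diff_distrib mult.left_commute)
    ultimately show ?thesis by (metis has_vector_derivative_at_within)
  qed
  moreover have "norm (of_real L * ((\<Sum>\<nu>\<in>I. w \<nu> * f (x \<nu> + \<tau> * L)) - c)) \<le> L * B"
    if "\<tau> \<in> {0..1}" for \<tau>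
    using bound[OF that] \<open>0 \<le> L\<close> by (simp add: norm_mult mult_left_mono)
  ultimately have "norm (W 1 - W 0) \<le> L * B * \<bar>1 - 0\<bar>"
    by (intro norm_diff_le_of_vector_derivative_bound[where S="{0..1}"]) auto
  moreover have "W 1 - W 0 = (\<Sum>\<nu>\<in>I. w \<nu> * (F (x \<nu> + L) - F (x \<nu>))) - of_real L * c"
    by (simp add: W_def right_diff_distrib sum_subtractf)
  ultimately show ?thesis by simp
qed

lemma bernstein_difference_estimate:
  assumes M: "1 \<le> M" and e: "0 \<le> eps (Suc M)" "eps (Suc M) < 1"
    and A: "a' - 1 \<in> A" "a' + 1 \<in> A"
    and bound: "\<And>s. s \<in> {0..2 / real (Suc M)} \<Longrightarrow>
      norm (SN (shifted_seq eps) f M (t, a' + s) - f (t + a')) \<le> B"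
  shows "norm (of_real (real (Suc M) / 2) * (\<Sum>\<nu>=0..M. of_real (bernstein_weight M t \<nu>) *
            (F (a' + hseq eps (Suc M) \<nu>) - F (a' + hseq eps (Suc M) (Suc \<nu>)))) - f (t + a'))
         \<le> B + eps (Suc M) * norm (f (t + a'))"
proof -
  define N where "N = Suc M"
  define L where "L = 2 * (1 - eps N) / real N"
  define x where "x \<nu> = a' + hseq eps N (Suc \<nu>)" for \<nu>
  have N: "1 \<le> N" "real N > 0" by (simp_all add: N_def)
  have L: "0 \<le> L" "L \<le> 2 / real N"
    using e N(2) unfolding L_def by (simp_all add: N_def divide_right_mono)
  have NL: "real N / 2 * L = 1 - eps N" using N(2) by (simp add: L_def)
  have x_L: "x \<nu> + L = a' + hseq eps N \<nu>" for \<nu>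
    using hseq_Suc[OF N(1), of eps \<nu>] by (simp add: x_def L_def)
  have nodes_in_A: "x \<nu> + \<tau> * L \<in> A" if "\<nu> \<in> {0..M}" "\<tau> \<in> {0..1}" for \<nu> \<tau>
  proof -
    have "-1 \<le> hseq eps N (Suc \<nu>)" "hseq eps N \<nu> \<le> 1"
      using hseq_bounds[of N eps] N e that by (simp_all add: N_def)
    moreover have "0 \<le> \<tau> * L" "\<tau> * L \<le> L" using that L(1) by (auto simp: mult_left_le_one_le)
    ultimately have "a' - 1 \<le> x \<nu> + \<tau> * L" "x \<nu> + \<tau> * L \<le> a' + 1"
      using x_L[of \<nu>] by (simp_all add: x_def)
    then show ?thesis using A interval_domain unfolding is_interval_1 by blast
  qed
  have SN_shifted: "(\<Sum>\<nu>=0..M. of_real (bernstein_weight M t \<nu>) * f (x \<nu> + s))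
      = SN (shifted_seq eps) f M (t, a' + s)" for s
    using M by (simp add: SN_eq_bernstein_sum hseq_shifted_seq x_def N_def algebra_simps)
  have "norm ((\<Sum>\<nu>=0..M. of_real (bernstein_weight M t \<nu>) * (F (x \<nu> + L) - F (x \<nu>)))
      - of_real L * f (t + a')) \<le> L * B"
  proof (rule weighted_increment_bound[OF _ L(1) nodes_in_A])
    fix \<tau> :: real assume "\<tau> \<in> {0..1}"
    then have "0 \<le> \<tau> * L" "\<tau> * L \<le> L" using L(1) by (simp_all add: mult_left_le_one_le)
    then have "\<tau> * L \<in> {0..2 / real (Suc M)}" using L(2) by (simp add: N_def)
    from bound[OF this]
    show "norm ((\<Sum>\<nu>=0..M. of_real (bernstein_weight M t \<nu>) * f (x \<nu> + \<tau> * L)) - f (t + a')) \<le> B"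
      by (simp only: SN_shifted)
  qed simp_all
  moreover have "0 \<le> real N / 2" "0 \<le> eps N" "B \<ge> 0"
    using e bound[of 0] by (auto simp: N_def intro: order_trans[OF norm_ge_zero])
  ultimately have "norm (of_real (real N / 2) * (\<Sum>\<nu>=0..M. of_real (bernstein_weight M t \<nu>)
      * (F (x \<nu> + L) - F (x \<nu>))) - f (t + a')) \<le> B + eps N * norm (f (t + a'))"
    using NL by (intro norm_rescaled_increment_le)
  moreover have "(\<Sum>\<nu>=0..M. of_real (bernstein_weight M t \<nu>) * (F (x \<nu> + L) - F (x \<nu>)))
      = (\<Sum>\<nu>=0..M. of_real (bernstein_weight M t \<nu>) *
          (F (a' + hseq eps (Suc M) \<nu>) - F (a' + hseq eps (Suc M) (Suc \<nu>))))"
    unfolding x_L by (simp add: x_def N_def)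
  ultimately show ?thesis unfolding N_def by simp
qed

lemma SN_primitive_error_bound:
  assumes M: "1 \<le> M" and e: "0 \<le> eps (Suc M)" "eps (Suc M) < 1" and aA: "(a, a') \<in> AA A"
    and bound: "\<And>t s. t \<in> {min 1 a..max 1 a} \<Longrightarrow> s \<in> {0..2 / real (Suc M)} \<Longrightarrow>
      norm (SN (shifted_seq eps) f M (t, a' + s) - f (t + a')) \<le> B"
    and f_bound: "\<And>t. t \<in> {min 1 a..max 1 a} \<Longrightarrow> norm (f (t + a')) \<le> P"
  shows "norm (SN eps F (Suc M) (a, a') - F (a + a'))
     \<le> norm (F (a' + hseq eps (Suc M) 0) - F (a' + 1)) + (B + eps (Suc M) * P) * \<bar>a - 1\<bar>"
proof -
  define g where "g \<nu> = F (a' + hseq eps (Suc M) \<nu>)" for \<nu>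
  define H where "H t = SN eps F (Suc M) (t, a') - F (t + a')" for t
  define S where "S = {min 1 a..max 1 a}"
  have A: "a' - 1 \<in> A" "a' + 1 \<in> A"
    using aA mem_AA_iff[OF interval_domain, of "(a, a')"] by auto
  have in_A: "t + a' \<in> A" if "t \<in> S" for t
    using segment_in_AA[OF interval_domain aA] that mem_AA_iff[OF interval_domain, of "(t, a')"]
    by (auto simp: S_def)
  have "(H has_vector_derivative
      of_real (real (Suc M) / 2) * (\<Sum>\<nu>=0..M. of_real (bernstein_weight M t \<nu>) * (g \<nu> - g (Suc \<nu>)))
        - f (t + a')) (at t within S)" if "t \<in> S" for t
  proof -
    have "((\<lambda>t. t + a') has_vector_derivative 1) (at t)"
      by (auto intro!: derivative_eq_intros simp flip: has_real_derivative_iff_has_vector_derivative)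
    from vector_diff_chain_at[OF this has_vector_derivative_primitive[OF in_A[OF that]]]
    have "((\<lambda>t. F (t + a')) has_vector_derivative f (t + a')) (at t)" by (simp add: o_def)
    moreover have "((\<lambda>t. SN eps F (Suc M) (t, a')) has_vector_derivative of_real (real (Suc M) / 2) *
        (\<Sum>\<nu>=0..M. of_real (bernstein_weight M t \<nu>) * (g \<nu> - g (Suc \<nu>)))) (at t)"
      unfolding SN_eq_bernstein_sum g_def fst_conv snd_conv by (rule bernstein_sum_has_vector_derivative)
    ultimately show ?thesis
      unfolding H_def by (intro has_vector_derivative_at_within[OF has_vector_derivative_diff])
  qed
  moreover have "norm (of_real (real (Suc M) / 2) * (\<Sum>\<nu>=0..M. of_real (bernstein_weight M t \<nu>)
      * (g \<nu> - g (Suc \<nu>))) - f (t + a')) \<le> B + eps (Suc M) * P" if "t \<in> S" for t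
  proof -
    have "norm (of_real (real (Suc M) / 2) * (\<Sum>\<nu>=0..M. of_real (bernstein_weight M t \<nu>)
      * (g \<nu> - g (Suc \<nu>))) - f (t + a')) \<le> B + eps (Suc M) * norm (f (t + a'))"
      unfolding g_def using bound that
      by (intro bernstein_difference_estimate[where M=M and eps=eps, OF M e A]) (auto simp: S_def)
    also have "\<dots> \<le> B + eps (Suc M) * P"
      using f_bound that e by (simp add: S_def mult_left_mono)
    finally show ?thesis .
  qed
  ultimately have "norm (H a - H 1) \<le> (B + eps (Suc M) * P) * \<bar>a - 1\<bar>"
    by (intro norm_diff_le_of_vector_derivative_bound[where S=S]) (auto simp: S_def)
  moreover have "H 1 = F (a' + hseq eps (Suc M) 0) - F (a' + 1)"
  proof -
    have "(\<Sum>\<nu>=0..Suc M. complex_of_real (if \<nu> = 0 then 1 else 0) * g \<nu>) = g 0"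
      by (induct M) auto
    then show ?thesis
      unfolding H_def SN_eq_bernstein_sum by (simp add: bernstein_weight_at_1 add.commute g_def)
  qed
  ultimately show ?thesis
    using norm_triangle_ineq2[of "H a" "H 1"] unfolding H_def by simp
qed

lemma boundary_node_uniform:
  assumes adm: "\<forall>eps\<in>E. admissible_seq eps" and lim: "(\<lambda>N. SUP eps\<in>E. eps N) \<longlonglongrightarrow> 0"
    and "compact K" "K \<subseteq> AA A" "\<eta> > 0"
  shows "\<forall>\<^sub>F N in sequentially. \<forall>eps\<in>E. \<forall>(a, a')\<in>K. norm (F (a' + hseq eps N 0) - F (a' + 1)) < \<eta>"
proof -
  define Q where "Q = (\<lambda>z. snd (fst z) + snd z) ` (K \<times> {-1..(1::real)})"
  have Q_mem: "a' + s \<in> Q" if "(a, a') \<in> K" "s \<in> {-1..1}" for a a' s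
    unfolding Q_def using that by (intro image_eqI[where x="((a, a'), s)"]) auto
  have "compact Q" unfolding Q_def
    by (intro compact_continuous_image compact_Times \<open>compact K\<close> compact_Icc continuous_intros)
  moreover have "Q \<subseteq> A"
    using \<open>K \<subseteq> AA A\<close> unfolding Q_def AA_def by fastforce
  ultimately have "uniformly_continuous_on Q F"
    by (meson compact_uniformly_continuous continuous_on_primitive continuous_on_subset)
  then obtain \<rho> where \<rho>: "\<rho> > 0"
    "\<And>x x'. x \<in> Q \<Longrightarrow> x' \<in> Q \<Longrightarrow> dist x' x < \<rho> \<Longrightarrow> dist (F x') (F x) < \<eta>"
    using \<open>\<eta> > 0\<close> unfolding uniformly_continuous_on_def by metis
  have "\<forall>\<^sub>F N in sequentially. (SUP eps\<in>E. eps N) < \<rho> / 2"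
    using order_tendstoD(2)[OF lim, of "\<rho> / 2"] \<rho>(1) by simp
  then have "\<forall>\<^sub>F N in sequentially. (SUP eps\<in>E. eps (Suc N)) < \<rho> / 2"
    by (rule eventually_sequentially_Suc[THEN iffD2])
  then have "\<forall>\<^sub>F N in sequentially. \<forall>eps\<in>E. \<forall>(a, a')\<in>K.
      norm (F (a' + hseq eps (Suc N) 0) - F (a' + 1)) < \<eta>"
  proof (rule eventually_mono, intro ballI, clarify)
    fix N eps a a' assume "(SUP eps\<in>E. eps (Suc N)) < \<rho> / 2" "eps \<in> E" "(a, a') \<in> K"
    with admissible_le_SUP[OF adm \<open>eps \<in> E\<close>, of "Suc N"]
    have "0 \<le> eps (Suc N)" "eps (Suc N) < 1" "eps (Suc N) < \<rho> / 2" by auto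
    with \<open>(a, a') \<in> K\<close> have "a' + (1 - 2 * eps (Suc N)) \<in> Q" "a' + 1 \<in> Q"
      and "dist (a' + (1 - 2 * eps (Suc N))) (a' + 1) < \<rho>"
      by (auto intro!: Q_mem simp: dist_real_def)
    then show "norm (F (a' + hseq eps (Suc N) 0) - F (a' + 1)) < \<eta>"
      using \<rho>(2) by (simp add: hseq_0 dist_norm)
  qed
  then show ?thesis by (rule eventually_sequentially_Suc[THEN iffD1])
qed

lemma SN_primitive_error_eventually:
  assumes "regular_supershift A f" "E \<noteq> {}"
    and adm: "\<forall>eps\<in>E. admissible_seq eps" and lim: "(\<lambda>N. SUP eps\<in>E. eps N) \<longlonglongrightarrow> 0"
    and K: "compact K" "K \<subseteq> AA A" and "\<eta> > 0"
    and P: "\<And>a a' t. (a, a') \<in> K \<Longrightarrow> t \<in> {min 1 a..max 1 a} \<Longrightarrow> norm (f (t + a')) \<le> P"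
  shows "\<forall>\<^sub>F M in sequentially. \<forall>eps\<in>E. \<forall>(a, a')\<in>K. norm (SN eps F (Suc M) (a, a') - F (a + a'))
    \<le> norm (F (a' + hseq eps (Suc M) 0) - F (a' + 1)) + (\<eta> + eps (Suc M) * P) * \<bar>a - 1\<bar>"
proof -
  have "\<forall>\<^sub>F M in sequentially. \<forall>d\<in>shifted_seq ` E. \<forall>(a, a')\<in>K. \<forall>t\<in>{min 1 a..max 1 a}.
      \<forall>s\<in>{0..2 / real (Suc M)}. norm (SN d f M (t, a' + s) - f (t + a')) < \<eta>"
    using adm admissible_shifted_seq SUP_shifted_seq_tendsto_0[OF assms(2) adm lim] \<open>\<eta> > 0\<close>
    by (intro SN_uniform_near_segments[OF open_domain interval_domain assms(1) _ _ K]) auto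
  moreover have "\<forall>\<^sub>F M in sequentially. 1 \<le> M" by (rule eventually_ge_at_top)
  ultimately show ?thesis
  proof eventually_elim
    case (elim M)
    show ?case
    proof (intro ballI, clarify)
      fix eps a a' assume "eps \<in> E" and aK: "(a, a') \<in> K"
      have "shifted_seq eps \<in> shifted_seq ` E" using \<open>eps \<in> E\<close> by blast
      from bspec[OF bspec[OF elim(1) this] aK]
      have "norm (SN (shifted_seq eps) f M (t, a' + s) - f (t + a')) \<le> \<eta>"
        if "t \<in> {min 1 a..max 1 a}" "s \<in> {0..2 / real (Suc M)}" for t s
        using that by (simp add: less_imp_le)
      with SN_primitive_error_bound[where eps=eps, OF elim(2) _ _ _ _ P[OF aK]] K(2) aK
        admissible_le_SUP[OF adm \<open>eps \<in> E\<close>, of "Suc M"]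
      show "norm (SN eps F (Suc M) (a, a') - F (a + a'))
          \<le> norm (F (a' + hseq eps (Suc M) 0) - F (a' + 1)) + (\<eta> + eps (Suc M) * P) * \<bar>a - 1\<bar>"
        by (simp add: subset_iff)
    qed
  qed
qed

lemma uniform_limit_SN_primitive:
  assumes "regular_supershift A f"
    and adm: "\<forall>eps\<in>E. admissible_seq eps" and lim: "(\<lambda>N. SUP eps\<in>E. eps N) \<longlonglongrightarrow> 0"
    and K: "compact K" "K \<subseteq> AA A"
  shows "uniform_limit (E \<times> K) (\<lambda>N q. SN (fst q) F N (snd q)) (\<lambda>q. F (fst (snd q) + snd (snd q)))
    sequentially"
proof (cases "E = {}")
  case False
  have "continuous_on A f" using assms(1) by (simp add: regular_supershift_def)
  then obtain P where P: "0 \<le> P"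
    "\<And>a a' t. (a, a') \<in> K \<Longrightarrow> t \<in> {min 1 a..max 1 a} \<Longrightarrow> norm (f (t + a')) \<le> P"
    using bounded_on_segments[OF open_domain interval_domain _ K] by blast
  obtain R0 where R0: "R0 > 0" "\<forall>x\<in>K. norm x \<le> R0"
    using compact_imp_bounded[OF K(1)] bounded_pos by blast
  have "\<bar>a - 1\<bar> \<le> R0 + 1" if "(a, a') \<in> K" for a a'
    using bspec[OF R0(2) that] norm_fst_le[of a a'] by simp
  then obtain R where R: "R > 0" "\<And>a a'. (a, a') \<in> K \<Longrightarrow> \<bar>a - 1\<bar> \<le> R"
    using R0(1) by (metis add_pos_pos zero_less_one)
  show ?thesis unfolding uniform_limit_iff
  proof (intro allI impI)
    fix \<epsilon> :: real assume "\<epsilon> > 0"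
    define \<eta> where "\<eta> = \<epsilon> / (4 * R)"
    have "\<eta> > 0" using \<open>\<epsilon> > 0\<close> R by (simp add: \<eta>_def)
    have "\<forall>\<^sub>F N in sequentially. \<forall>eps\<in>E. \<forall>(a, a')\<in>K.
        norm (F (a' + hseq eps N 0) - F (a' + 1)) < \<epsilon> / 4"
      using \<open>\<epsilon> > 0\<close> by (intro boundary_node_uniform[OF adm lim K]) simp
    moreover have "\<forall>\<^sub>F N in sequentially. (SUP eps\<in>E. eps N) < \<eta> / (P + 1)"
      using order_tendstoD(2)[OF lim, of "\<eta> / (P + 1)"] \<open>\<eta> > 0\<close> P(1) by simp
    ultimately have "\<forall>\<^sub>F M in sequentially. (\<forall>eps\<in>E. \<forall>(a, a')\<in>K.
        norm (F (a' + hseq eps (Suc M) 0) - F (a' + 1)) < \<epsilon> / 4) \<and> (SUP eps\<in>E. eps (Suc M)) < \<eta> / (P + 1)"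
      by (subst eventually_sequentially_Suc) (rule eventually_conj)
    moreover have "\<forall>\<^sub>F M in sequentially. 1 \<le> M" by (rule eventually_ge_at_top)
    moreover have "\<forall>\<^sub>F M in sequentially. \<forall>eps\<in>E. \<forall>(a, a')\<in>K. norm (SN eps F (Suc M) (a, a') - F (a + a'))
        \<le> norm (F (a' + hseq eps (Suc M) 0) - F (a' + 1)) + (\<eta> + eps (Suc M) * P) * \<bar>a - 1\<bar>"
      using P(2) by (rule SN_primitive_error_eventually[OF assms(1) False adm lim K \<open>\<eta> > 0\<close>])
    ultimately have "\<forall>\<^sub>F M in sequentially. \<forall>q\<in>E \<times> K.
        dist (SN (fst q) F (Suc M) (snd q)) (F (fst (snd q) + snd (snd q))) < \<epsilon>"
    proof eventually_elim
      case (elim M)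
      show ?case
      proof (intro ballI, clarify)
        fix eps a a' assume "eps \<in> E" and aK: "(a, a') \<in> K"
        have "eps (Suc M) * P \<le> \<eta> / (P + 1) * (P + 1)"
          using admissible_le_SUP[OF adm \<open>eps \<in> E\<close>, of "Suc M"] elim(1) P(1) by (intro mult_mono) auto
        then have "(\<eta> + eps (Suc M) * P) * \<bar>a - 1\<bar> \<le> (2 * \<eta>) * R"
          using P(1) R aK \<open>\<eta> > 0\<close> by (intro mult_mono) auto
        moreover have "2 * \<eta> * R = \<epsilon> / 2" using R by (simp add: \<eta>_def)
        ultimately show "dist (SN (fst (eps, a, a')) F (Suc M) (snd (eps, a, a')))
            (F (fst (snd (eps, a, a')) + snd (snd (eps, a, a')))) < \<epsilon>"
          using bspec[OF bspec[OF elim(3) \<open>eps \<in> E\<close>] aK] \<open>\<epsilon> > 0\<close>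
            bspec[OF bspec[OF conjunct1[OF elim(1)] \<open>eps \<in> E\<close>] aK]
          by (simp add: dist_norm)
      qed
    qed
    then show "\<forall>\<^sub>F N in sequentially. \<forall>q\<in>E \<times> K.
        dist (SN (fst q) F N (snd q)) (F (fst (snd q) + snd (snd q))) < \<epsilon>"
      by (rule eventually_sequentially_Suc[THEN iffD1])
  qed
qed (simp add: uniform_limit_iff)

end

theorem mainTheorem8:
  fixes A :: "real set" and \<psi> :: "real \<Rightarrow> complex" and a0 :: real
  assumes "open_interval_gt2 A"
    and "regular_supershift A \<psi>"
    and "a0 \<in> A"
  shows "regular_supershift A
           (\<lambda>a. interval_lebesgue_integral lborel (ereal a0) (ereal a) \<psi>)"
proof -
  have A: "open A" "is_interval A" using assms(1) by (auto simp: open_interval_gt2_def)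
  have "continuous_on A \<psi>" using assms(2) by (simp add: regular_supershift_def)
  then interpret primitive_on A \<psi> "\<lambda>a. LBINT y=a0..a. \<psi> y"
    using A interval_integral_has_vector_derivative[OF A _ assms(3)] by unfold_locales
  show ?thesis
    by (rule regular_supershiftI[OF continuous_on_primitive uniform_limit_SN_primitive[OF assms(2)]])
qed

end
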